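(* Let $N, M, n$ be integers with $0 \le M \le N$ and $1 \le n \le N$. Draw $n$ individuals uniformly at random without replacement from a population of $N$ individuals, of which exactly $M$ are positive, and let $i$ be the number of positive individuals among the $n$ drawn. Let $0<\delta<1$ and $c>0$, and put $x = (N/c)^2 > 0$ and $y = -\frac{1}{2}\ln(\delta/2) > 0$. Then with probability at least $1-\delta$ we have $M \in \big[\tfrac{i}{n}N - c,\ \tfrac{i}{n}N + c\big]$, provided that (S1) $n \ge \frac{(N+1)xy}{N+xy}$, in the case $N \le \frac{c^2}{y} - 2$; or (S2) $n \ge \frac{(N-1)xy}{2(N+xy)} + \sqrt{\Big(\frac{(N-1)xy}{2(N+xy)}\Big)^2 + \frac{Nxy}{N+xy}}$, in the case $N > \frac{c^2}{y} - 2$. Moreover, $\frac{(N-1)xy}{2(N+xy)} + \sqrt{\Big(\frac{(N-1)xy}{2(N+xy)}\Big)^2 + \frac{Nxy}{N+xy}} \ge \frac{Nxy}{N+xy}$.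
   Context: $i$ has the hypergeometric distribution: $\mathbb{P}[i=k] = \binom{M}{k}\binom{N-M}{n-k}/\binom{N}{n}$. $M$ is fixed (unknown) and the probability is over the random sample. *)

theory Defs
  imports Complex_Main
begin

definition hypergeom_pmf :: "nat \<Rightarrow> nat \<Rightarrow> nat \<Rightarrow> nat \<Rightarrow> real" where
  "hypergeom_pmf N M n k =
     real (M choose k) * real ((N - M) choose (n - k)) / real (N choose n)"

definition hypergeom_prob :: "nat \<Rightarrow> nat \<Rightarrow> nat \<Rightarrow> (nat \<Rightarrow> bool) \<Rightarrow> real" where
  "hypergeom_prob N M n P = (\<Sum>k\<in>{k\<in>{0..n}. P k}. hypergeom_pmf N M n k)"

end

theory Submission
  imports Defs "HOL-Probability.Hoeffding"
begin

(* A sample of size n from N + 1 individuals is a sample from N individuals after discarding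
   a uniformly random undrawn one, which is positive with probability p = M / (N + 1).
   This writes the moment generating function of i/n - M/(N + 1) as a p-mixture, and
   Hoeffding's lemma for the Bernoulli mixing variable contributes a factor exp (s^2 / (8 N^2)).
   Inducting from N = n gives Serfling's bound
     E exp (s (i/n - M/N)) <= exp (s^2/8 * sum_{k=n}^{N-1} 1/k^2) <= exp (s^2 (N-n)(n+1) / (8 n^2 N)),
   and applied to the N - n undrawn individuals it gives the variance proxy n (N - n + 1) / N
   instead of (N - n)(n + 1) / N. A two-sided Chernoff bound with proxy V yields the
   probability 1 - 2 exp (-2 (c n / N)^2 / V) >= 1 - delta as soon as n^2 >= x y V; conditions
   (S1) and (S2) are exactly this inequality for the two proxies, so the case distinction on
   N versus c^2/y - 2 plays no role. *)

lemma Hoeffdings_lemma_bernoulli: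
  fixes p h :: real
  assumes "0 \<le> p" "p \<le> 1"
  shows "p * exp (h * (1 - p)) + (1 - p) * exp (- h * p) \<le> exp (h^2 / 8)"
proof -
  have nonneg: "p * exp (h * (1 - p)) + (1 - p) * exp (- h * p) \<le> exp (h^2 / 8)"
    if "0 \<le> p" "p \<le> 1" "0 \<le> h" for p h :: real
  proof -
    have pos: "1 + p * (exp h - 1) > 0"
      using that by (intro add_pos_nonneg mult_nonneg_nonneg) auto
    have "p * exp (h * (1 - p)) + (1 - p) * exp (- h * p) = exp (- h * p) * (1 + p * (exp h - 1))"
      by (simp add: algebra_simps flip: exp_add)
    also have "\<dots> = exp (- h * p + ln (1 + p * (exp h - 1)))"
      using pos by (simp add: exp_add exp_diff exp_minus field_simps)
    also have "\<dots> \<le> exp (h^2 / 8)"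
      using Hoeffdings_lemma_aux[of h p] that by simp
    finally show ?thesis .
  qed
  show ?thesis
  proof (cases "0 \<le> h")
    case False
    then show ?thesis
      using nonneg[of "1 - p" "- h"] assms by (simp add: algebra_simps)
  qed (use nonneg assms in blast)
qed

lemma sum_exp_tail_le:
  fixes w D :: "'a \<Rightarrow> real" and a l :: real
  assumes "finite A" "\<And>k. k \<in> A \<Longrightarrow> 0 \<le> w k" "0 \<le> l"
  shows "(\<Sum>k\<in>{k\<in>A. a < D k}. w k) \<le> exp (- l * a) * (\<Sum>k\<in>A. w k * exp (l * D k))"
proof -
  have "(\<Sum>k\<in>{k\<in>A. a < D k}. w k) \<le> (\<Sum>k\<in>{k\<in>A. a < D k}. w k * exp (l * (D k - a)))"
  proof (intro sum_mono)
    fix k assume k: "k \<in> {k \<in> A. a < D k}"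
    then have "1 \<le> exp (l * (D k - a))"
      using assms by simp
    then show "w k \<le> w k * exp (l * (D k - a))"
      using k assms mult_left_mono[of 1 _ "w k"] by simp
  qed
  also have "\<dots> \<le> (\<Sum>k\<in>A. w k * exp (l * (D k - a)))"
    using assms by (intro sum_mono2) auto
  also have "\<dots> = exp (- l * a) * (\<Sum>k\<in>A. w k * exp (l * D k))"
    by (simp add: sum_distrib_left right_diff_distrib exp_diff exp_minus field_simps)
  finally show ?thesis .
qed

lemma sum_abs_le_ge_of_subgaussian:
  fixes w D :: "'a \<Rightarrow> real" and a V :: real
  assumes "finite A" "\<And>k. k \<in> A \<Longrightarrow> 0 \<le> w k" "sum w A = 1"
    and mgf: "\<And>l. (\<Sum>k\<in>A. w k * exp (l * D k)) \<le> exp (l^2 * V / 8)"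
    and "0 < V" "0 \<le> a"
  shows "1 - 2 * exp (- 2 * a^2 / V) \<le> (\<Sum>k\<in>{k\<in>A. \<bar>D k\<bar> \<le> a}. w k)"
proof -
  define l where "l = 4 * a / V"
  have tail: "(\<Sum>k\<in>{k\<in>A. a < E k}. w k) \<le> exp (- 2 * a^2 / V)"
    if "(\<Sum>k\<in>A. w k * exp (l * E k)) \<le> exp (l^2 * V / 8)" for E
  proof -
    have "(\<Sum>k\<in>{k\<in>A. a < E k}. w k) \<le> exp (- l * a) * (\<Sum>k\<in>A. w k * exp (l * E k))"
      using assms by (intro sum_exp_tail_le) (auto simp: l_def)
    also have "\<dots> \<le> exp (- l * a) * exp (l^2 * V / 8)"
      using that by simp
    also have "\<dots> = exp (- 2 * a^2 / V)"
      using \<open>0 < V\<close> by (simp add: l_def power2_eq_square field_simps flip: exp_add)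
    finally show ?thesis .
  qed
  have "w k = (if \<bar>D k\<bar> \<le> a then w k else 0) + (if a < D k then w k else 0)
      + (if a < - D k then w k else 0)" for k
    using \<open>0 \<le> a\<close> by auto
  then have "sum w A = (\<Sum>k\<in>A. (if \<bar>D k\<bar> \<le> a then w k else 0) + (if a < D k then w k else 0)
      + (if a < - D k then w k else 0))"
    by (rule sum.cong[OF refl])
  then have "1 = (\<Sum>k\<in>{k\<in>A. \<bar>D k\<bar> \<le> a}. w k) + (\<Sum>k\<in>{k\<in>A. a < D k}. w k)
      + (\<Sum>k\<in>{k\<in>A. a < - D k}. w k)"
    using assms(1,3) by (simp only: sum.distrib sum.inter_filter)
  moreover have "(\<Sum>k\<in>{k\<in>A. a < - D k}. w k) \<le> exp (- 2 * a^2 / V)"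
    using mgf[of "- l"] by (intro tail) simp
  ultimately show ?thesis
    using tail[OF mgf] by linarith
qed

lemma sum_inverse_squares_le:
  assumes "1 \<le> n" "n \<le> N"
  shows "(real n)^2 * (\<Sum>k = n..<N. 1 / (real k)^2) \<le> (real N - real n) * (real n + 1) / real N"
  using assms(2)
proof (induction N rule: nat_induct_at_least)
  case (Suc N)
  have N: "real n \<le> real N" "1 \<le> real n"
    using Suc.hyps assms(1) by auto
  have "(real n)^2 / (real N)^2 \<le> real n * (real n + 1) / (real N * (real N + 1))"
    using N by (simp add: divide_simps power2_eq_square) (simp add: algebra_simps mult_left_mono)
  also have "\<dots> = (real (Suc N) - real n) * (real n + 1) / real (Suc N)
      - (real N - real n) * (real n + 1) / real N"
    using N by (simp add: divide_simps) (simp add: algebra_simps)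
  finally show ?case
    using Suc.IH Suc.hyps by (simp add: algebra_simps)
qed simp

lemma sum_hypergeom_pmf:
  assumes "M \<le> N" "n \<le> N"
  shows "(\<Sum>k\<in>{0..n}. hypergeom_pmf N M n k) = 1"
proof -
  have "(\<Sum>k\<in>{0..n}. real (M choose k) * real ((N - M) choose (n - k))) = real (N choose n)"
    using vandermonde[of M "N - M" n] assms
    by (simp add: atMost_atLeast0 flip: of_nat_mult of_nat_sum)
  then show ?thesis
    using assms by (simp add: hypergeom_pmf_def flip: sum_divide_distrib)
qed

lemma hypergeom_pmf_nonneg: "0 \<le> hypergeom_pmf N M n k"
  by (simp add: hypergeom_pmf_def)

lemma hypergeom_pmf_eq_0:
  assumes "M < k \<or> N - M < n - k"
  shows "hypergeom_pmf N M n k = 0"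
  using assms by (auto simp: hypergeom_pmf_def)

lemma hypergeom_pmf_all_drawn:
  assumes "M \<le> N"
  shows "hypergeom_pmf N M N k = (if k = M then 1 else 0)"
  using assms by (auto simp: hypergeom_pmf_def)

lemma hypergeom_prob_all_drawn:
  assumes "M \<le> N"
  shows "hypergeom_prob N M N P = (if P M then 1 else 0)"
  using assms by (simp add: hypergeom_prob_def hypergeom_pmf_all_drawn)

lemma hypergeom_pmf_complement:
  assumes "k \<le> n" "k \<le> M" "M \<le> k + (N - n)" "n \<le> N" "M \<le> N"
  shows "hypergeom_pmf N M (N - n) (M - k) = hypergeom_pmf N M n k"
proof -
  have "N - n - (M - k) = (N - M) - (n - k)" "n - k \<le> N - M"
    using assms by auto
  then show ?thesis
    using assms by (simp add: hypergeom_pmf_def binomial_symmetric[of k M]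
        binomial_symmetric[of "n - k" "N - M"] binomial_symmetric[of n N])
qed

text \<open>The positives outside a sample of size n form a sample of size N - n.\<close>
lemma sum_hypergeom_pmf_complement:
  assumes "n \<le> N" "M \<le> N"
  shows "(\<Sum>k\<in>{0..n}. hypergeom_pmf N M n k * g k)
       = (\<Sum>j\<in>{0..N - n}. hypergeom_pmf N M (N - n) j * g (M - j))"
proof -
  have "(\<Sum>k\<in>{0..n}. hypergeom_pmf N M n k * g k)
      = (\<Sum>k\<in>{k. k \<le> n \<and> k \<le> M \<and> M \<le> k + (N - n)}. hypergeom_pmf N M n k * g k)"
    using assms by (intro sum.mono_neutral_right) (auto intro!: hypergeom_pmf_eq_0)
  also have "\<dots> = (\<Sum>j\<in>{j. j \<le> N - n \<and> j \<le> M \<and> M \<le> j + n}. hypergeom_pmf N M (N - n) j * g (M - j))"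
    using assms
    by (intro sum.reindex_bij_witness[of _ "\<lambda>j. M - j" "\<lambda>k. M - k"])
       (auto simp: hypergeom_pmf_complement)
  also have "\<dots> = (\<Sum>j\<in>{0..N - n}. hypergeom_pmf N M (N - n) j * g (M - j))"
    using assms by (intro sum.mono_neutral_left) (auto intro!: hypergeom_pmf_eq_0)
  finally show ?thesis .
qed

lemma choose_mult_choose_absorb:
  assumes "k \<le> n"
  shows "(M + Q - n) * ((M choose k) * (Q choose (n - k)))
    = M * ((M - 1) choose k) * (Q choose (n - k)) + Q * ((Q - 1) choose (n - k)) * (M choose k)"
proof -
  have "(M + Q - n) * ((M choose k) * (Q choose (n - k)))
      = (M - k) * (M choose k) * (Q choose (n - k)) + (Q - (n - k)) * (Q choose (n - k)) * (M choose k)"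
  proof (cases "k \<le> M \<and> n - k \<le> Q")
    case True
    then have "M + Q - n = (M - k) + (Q - (n - k))"
      using assms by auto
    then show ?thesis
      by (simp add: algebra_simps)
  qed auto
  then show ?thesis
    by (simp only: binomial_absorb_comp)
qed

text \<open>Discard a uniformly random individual that was not drawn: it is positive with
  probability M / (N + 1), and the sample is a uniform sample of the remaining N.\<close>
lemma hypergeom_pmf_Suc:
  assumes "k \<le> n" "n \<le> N" "M \<le> Suc N"
  shows "hypergeom_pmf (Suc N) M n k =
     real M / real (Suc N) * hypergeom_pmf N (M - 1) n k
     + real (Suc N - M) / real (Suc N) * hypergeom_pmf N M n k"
proof -
  define Q where "Q = Suc N - M"
  have "(Suc N - n) * ((M choose k) * (Q choose (n - k)))
      = M * ((M - 1) choose k) * (Q choose (n - k)) + Q * ((Q - 1) choose (n - k)) * (M choose k)"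
    using choose_mult_choose_absorb[OF assms(1), of M Q] assms(3) by (simp add: Q_def)
  then have count: "real (Suc N - n) * real (M choose k) * real (Q choose (n - k))
      = real M * real ((M - 1) choose k) * real (Q choose (n - k))
        + real Q * real ((Q - 1) choose (n - k)) * real (M choose k)"
    by (simp only: mult.assoc flip: of_nat_mult of_nat_add of_nat_eq_iff)
  have absorb: "real (Suc N - n) * real (Suc N choose n) = real (Suc N) * real (N choose n)"
    using binomial_absorb_comp[of "Suc N" n] by (metis diff_Suc_1 of_nat_mult)
  have pos: "real (N choose n) > 0" "real (Suc N choose n) > 0"
    using assms by auto
  have "hypergeom_pmf (Suc N) M n k * (real (Suc N) * real (N choose n))
      = real (M choose k) * real (Q choose (n - k)) / real (Suc N choose n)
        * (real (Suc N - n) * real (Suc N choose n))"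
    by (simp only: absorb hypergeom_pmf_def Q_def)
  also have "\<dots> = real (Suc N - n) * real (M choose k) * real (Q choose (n - k))"
    using pos by simp
  also have "\<dots> = real M * hypergeom_pmf N (M - 1) n k * real (N choose n)
      + real Q * hypergeom_pmf N M n k * real (N choose n)"
    unfolding count using pos
    by (cases "M = 0") (simp_all add: hypergeom_pmf_def Q_def Suc_diff_le)
  also have "\<dots> = (real M / real (Suc N) * hypergeom_pmf N (M - 1) n k
      + real Q / real (Suc N) * hypergeom_pmf N M n k) * (real (Suc N) * real (N choose n))"
    by (simp add: field_simps del: of_nat_Suc)
  finally show ?thesis
    using pos by (simp add: Q_def)
qed

definition hypergeom_mean_mgf :: "nat \<Rightarrow> nat \<Rightarrow> nat \<Rightarrow> real \<Rightarrow> real" where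
  "hypergeom_mean_mgf N M n s =
     (\<Sum>k\<in>{0..n}. hypergeom_pmf N M n k * exp (s * (real k / real n - real M / real N)))"

lemma hypergeom_mean_mgf_all_drawn:
  assumes "M \<le> n"
  shows "hypergeom_mean_mgf n M n s = 1"
proof -
  have "hypergeom_mean_mgf n M n s
      = (\<Sum>k\<in>{0..n}. if k = M then exp (s * (real k / real n - real M / real n)) else 0)"
    using assms unfolding hypergeom_mean_mgf_def by (intro sum.cong) (auto simp: hypergeom_pmf_all_drawn)
  then show ?thesis
    using assms by simp
qed

lemma exp_centered_Suc:
  fixes s t p h :: real
  assumes "0 < N" "p = real M / real (Suc N)" "h = - s / real N"
  shows "exp (s * (t - real M / real (Suc N))) = exp (- h * p) * exp (s * (t - real M / real N))"
    and "M \<noteq> 0 \<Longrightarrow>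
      exp (s * (t - real M / real (Suc N))) = exp (h * (1 - p)) * exp (s * (t - real (M - 1) / real N))"
proof -
  have "s * (t - real M / real (Suc N)) = - h * p + s * (t - real M / real N)"
    using assms(1) unfolding assms(2,3)
    by (simp add: field_simps del: of_nat_Suc) (simp add: algebra_simps)
  then show "exp (s * (t - real M / real (Suc N))) = exp (- h * p) * exp (s * (t - real M / real N))"
    by (simp flip: exp_add)
  assume "M \<noteq> 0"
  then have "s * (t - real M / real (Suc N)) = h * (1 - p) + s * (t - real (M - 1) / real N)"
    using assms(1) unfolding assms(2,3)
    by (simp add: of_nat_diff field_simps del: of_nat_Suc) (simp add: algebra_simps)
  then show "exp (s * (t - real M / real (Suc N))) = exp (h * (1 - p)) * exp (s * (t - real (M - 1) / real N))"
    by (simp flip: exp_add)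
qed

lemma hypergeom_mean_mgf_Suc:
  fixes s :: real
  assumes "1 \<le> n" "n \<le> N" "M \<le> Suc N"
  defines "p \<equiv> real M / real (Suc N)" and "h \<equiv> - s / real N"
  shows "hypergeom_mean_mgf (Suc N) M n s =
    p * exp (h * (1 - p)) * hypergeom_mean_mgf N (M - 1) n s
    + (1 - p) * exp (- h * p) * hypergeom_mean_mgf N M n s"
proof -
  have q: "real (Suc N - M) / real (Suc N) = 1 - p"
    using assms by (simp add: p_def of_nat_diff field_simps del: of_nat_Suc)
  have "0 < N"
    using assms by simp
  note shift = exp_centered_Suc[OF this meta_eq_to_obj_eq[OF p_def] meta_eq_to_obj_eq[OF h_def]]
  have "hypergeom_pmf (Suc N) M n k * exp (s * (real k / real n - real M / real (Suc N)))
      = p * exp (h * (1 - p)) * (hypergeom_pmf N (M - 1) n k * exp (s * (real k / real n - real (M - 1) / real N)))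
        + (1 - p) * exp (- h * p) * (hypergeom_pmf N M n k * exp (s * (real k / real n - real M / real N)))"
    if "k \<le> n" for k
  proof -
    let ?E = "exp (s * (real k / real n - real M / real (Suc N)))"
    have first: "p * ?E = p * exp (h * (1 - p)) * exp (s * (real k / real n - real (M - 1) / real N))"
    proof (cases "M = 0")
      case False
      then show ?thesis
        by (simp only: shift(2)[OF False] mult.assoc)
    qed (simp add: p_def)
    have "hypergeom_pmf (Suc N) M n k * ?E
        = p * ?E * hypergeom_pmf N (M - 1) n k + (1 - p) * ?E * hypergeom_pmf N M n k"
      unfolding hypergeom_pmf_Suc[OF that assms(2,3)] q p_def by (simp add: algebra_simps)
    also have "\<dots> = p * exp (h * (1 - p)) * exp (s * (real k / real n - real (M - 1) / real N))
          * hypergeom_pmf N (M - 1) n k + (1 - p) * ?E * hypergeom_pmf N M n k"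
      by (simp only: first)
    also have "\<dots> = p * exp (h * (1 - p)) * exp (s * (real k / real n - real (M - 1) / real N))
          * hypergeom_pmf N (M - 1) n k
        + (1 - p) * (exp (- h * p) * exp (s * (real k / real n - real M / real N)))
          * hypergeom_pmf N M n k"
      by (simp only: shift(1))
    finally show ?thesis
      by (simp only: mult_ac)
  qed
  then show ?thesis
    unfolding hypergeom_mean_mgf_def sum_distrib_left sum.distrib[symmetric]
    by (intro sum.cong) auto
qed

lemma hypergeom_mean_mgf_le:
  fixes s :: real
  assumes "1 \<le> n" "n \<le> N" "M \<le> N"
  shows "hypergeom_mean_mgf N M n s \<le> exp (s^2 / 8 * (\<Sum>k = n..<N. 1 / (real k)^2))"
  using assms(2,3)
proof (induction N arbitrary: M rule: nat_induct_at_least)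
  case base
  then show ?case
    by (simp add: hypergeom_mean_mgf_all_drawn)
next
  case (Suc N)
  define p where "p = real M / real (Suc N)"
  define h where "h = - s / real N"
  define B where "B = exp (s^2 / 8 * (\<Sum>k = n..<N. 1 / (real k)^2))"
  have p: "0 \<le> p" "p \<le> 1"
    using Suc.prems by (auto simp: p_def)
  have positive_removed: "p * exp (h * (1 - p)) * hypergeom_mean_mgf N (M - 1) n s
      \<le> p * exp (h * (1 - p)) * B"
  proof (cases "M = 0")
    case False
    then show ?thesis
      using Suc.IH[of "M - 1"] Suc.prems p unfolding B_def by (intro mult_left_mono) auto
  qed (simp add: p_def)
  have negative_removed: "(1 - p) * exp (- h * p) * hypergeom_mean_mgf N M n s
      \<le> (1 - p) * exp (- h * p) * B"
  proof (cases "M = Suc N")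
    case False
    then show ?thesis
      using Suc.IH[of M] Suc.prems p unfolding B_def by (intro mult_left_mono) auto
  qed (simp add: p_def)
  have "hypergeom_mean_mgf (Suc N) M n s
      = p * exp (h * (1 - p)) * hypergeom_mean_mgf N (M - 1) n s
        + (1 - p) * exp (- h * p) * hypergeom_mean_mgf N M n s"
    unfolding p_def h_def using assms(1) Suc by (intro hypergeom_mean_mgf_Suc) auto
  also have "\<dots> \<le> (p * exp (h * (1 - p)) + (1 - p) * exp (- h * p)) * B"
    using positive_removed negative_removed by (simp add: algebra_simps)
  also have "\<dots> \<le> exp (h^2 / 8) * B"
    using Hoeffdings_lemma_bernoulli[OF p] by (simp add: B_def)
  also have "\<dots> = exp (s^2 / 8 * (\<Sum>k = n..<Suc N. 1 / (real k)^2))"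
    using Suc.hyps by (simp add: B_def h_def power_divide field_simps flip: exp_add)
  finally show ?case .
qed

lemma hypergeom_mean_mgf_le_Serfling:
  fixes s :: real
  assumes "1 \<le> n" "n \<le> N" "M \<le> N"
  shows "hypergeom_mean_mgf N M n s
    \<le> exp ((s / real n)^2 * ((real N - real n) * (real n + 1) / real N) / 8)"
proof -
  have "s^2 / 8 * (\<Sum>k = n..<N. 1 / (real k)^2)
      = (s / real n)^2 * ((real n)^2 * (\<Sum>k = n..<N. 1 / (real k)^2)) / 8"
    using assms(1) by (simp add: power_divide)
  also have "\<dots> \<le> (s / real n)^2 * ((real N - real n) * (real n + 1) / real N) / 8"
    using sum_inverse_squares_le[OF assms(1,2)] by (intro divide_right_mono mult_left_mono) auto
  finally show ?thesis
    using hypergeom_mean_mgf_le[OF assms, of s] by (meson exp_le_cancel_iff order_trans)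
qed

lemma hypergeom_count_mgf_le:
  fixes l :: real
  assumes "1 \<le> n" "n \<le> N" "M \<le> N"
  shows "(\<Sum>k\<in>{0..n}. hypergeom_pmf N M n k * exp (l * (real k - real n * real M / real N)))
    \<le> exp (l^2 * ((real N - real n) * (real n + 1) / real N) / 8)"
proof -
  have "(\<Sum>k\<in>{0..n}. hypergeom_pmf N M n k * exp (l * (real k - real n * real M / real N)))
      = hypergeom_mean_mgf N M n (l * real n)"
    unfolding hypergeom_mean_mgf_def using assms(1) by (intro sum.cong) (simp_all add: field_simps)
  also have "\<dots> \<le> exp (l^2 * ((real N - real n) * (real n + 1) / real N) / 8)"
    using hypergeom_mean_mgf_le_Serfling[OF assms, of "l * real n"] assms(1) by simp
  finally show ?thesis .
qed

lemma hypergeom_count_mgf_le_complement: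
  fixes l :: real
  assumes "n < N" "M \<le> N"
  shows "(\<Sum>k\<in>{0..n}. hypergeom_pmf N M n k * exp (l * (real k - real n * real M / real N)))
    \<le> exp (l^2 * (real n * (real N - real n + 1) / real N) / 8)"
proof -
  have deviation: "hypergeom_pmf N M (N - n) j * exp (l * (real (M - j) - real n * real M / real N))
      = hypergeom_pmf N M (N - n) j * exp (- l * (real j - real (N - n) * real M / real N))" for j
  proof (cases "j \<le> M")
    case True
    have "real (M - j) - real n * real M / real N = - (real j - real (N - n) * real M / real N)"
      using True assms by (simp add: of_nat_diff left_diff_distrib diff_divide_distrib)
    then show ?thesis
      by (simp only: mult_minus_left mult_minus_right)
  qed (simp add: hypergeom_pmf_eq_0)
  have "(\<Sum>k\<in>{0..n}. hypergeom_pmf N M n k * exp (l * (real k - real n * real M / real N)))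
      = (\<Sum>j\<in>{0..N - n}. hypergeom_pmf N M (N - n) j * exp (- l * (real j - real (N - n) * real M / real N)))"
    unfolding sum_hypergeom_pmf_complement[OF less_imp_le[OF assms(1)] assms(2)] deviation ..
  also have "\<dots> \<le> exp ((- l)^2 * ((real N - real (N - n)) * (real (N - n) + 1) / real N) / 8)"
    using assms by (intro hypergeom_count_mgf_le) auto
  also have "\<dots> = exp (l^2 * (real n * (real N - real n + 1) / real N) / 8)"
    using assms by (simp add: of_nat_diff)
  finally show ?thesis .
qed

lemma hypergeom_prob_estimate_ge:
  fixes \<delta> c V :: real
  assumes "M \<le> N" "1 \<le> n" "n \<le> N" "0 < \<delta>" "0 < c" "0 < V"
    and mgf: "\<And>l. (\<Sum>k\<in>{0..n}. hypergeom_pmf N M n k * exp (l * (real k - real n * real M / real N)))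
      \<le> exp (l^2 * V / 8)"
    and size: "(real N / c)^2 * (- (1/2) * ln (\<delta> / 2)) * V \<le> (real n)^2"
  shows "1 - \<delta> \<le> hypergeom_prob N M n
    (\<lambda>i. real i / real n * real N - c \<le> real M \<and> real M \<le> real i / real n * real N + c)"
proof -
  define a where "a = c * real n / real N"
  have N: "real N > 0" "real n > 0"
    using assms by auto
  have event: "(real i / real n * real N - c \<le> real M \<and> real M \<le> real i / real n * real N + c)
      \<longleftrightarrow> \<bar>real i - real n * real M / real N\<bar> \<le> a" for i
    using N by (simp add: a_def abs_le_iff field_simps)
  have "1 - 2 * exp (- 2 * a^2 / V) \<le> hypergeom_prob N M n
      (\<lambda>i. real i / real n * real N - c \<le> real M \<and> real M \<le> real i / real n * real N + c)"
    unfolding hypergeom_prob_def event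
    using assms N by (intro sum_abs_le_ge_of_subgaussian sum_hypergeom_pmf hypergeom_pmf_nonneg)
      (auto simp: a_def)
  moreover have "- (1/2) * ln (\<delta> / 2) * V \<le> a^2"
    using size N \<open>0 < c\<close> by (simp add: a_def power_divide field_simps)
  then have "- 2 * a^2 / V \<le> ln (\<delta> / 2)"
    using \<open>0 < V\<close> by (simp add: field_simps)
  then have "exp (- 2 * a^2 / V) \<le> \<delta> / 2"
    using \<open>0 < \<delta>\<close> by (metis exp_le_cancel_iff exp_ln half_gt_zero)
  ultimately show ?thesis
    by linarith
qed

lemma sample_size_linear_bound:
  fixes N n t :: real
  assumes "0 < N" "0 < n" "0 \<le> t" "(N + 1) * t / (N + t) \<le> n"
  shows "t * (n * (N - n + 1) / N) \<le> n^2"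
proof -
  have "t * (N - n + 1) \<le> n * N"
    using assms by (simp add: field_simps)
  then have "t * (N - n + 1) * n \<le> n * N * n"
    using assms by (intro mult_right_mono) auto
  then show ?thesis
    using assms by (simp add: field_simps power2_eq_square)
qed

lemma sample_size_quadratic_bound:
  fixes N n t :: real
  assumes "0 < N" "0 \<le> t"
    and "(N - 1) * t / (2 * (N + t)) + sqrt (((N - 1) * t / (2 * (N + t)))^2 + N * t / (N + t)) \<le> n"
  shows "t * ((N - n) * (n + 1) / N) \<le> n^2"
proof -
  define A where "A = (N - 1) * t / (2 * (N + t))"
  define B where "B = N * t / (N + t)"
  have Nt: "N + t > 0"
    using assms by simp
  have "A^2 + B \<le> (n - A)^2"
    using assms(3) by (intro sqrt_le_D) (simp add: A_def B_def)
  then have "B * (N + t) \<le> (n^2 - 2 * A * n) * (N + t)"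
    using Nt by (intro mult_right_mono) (auto simp: power2_eq_square algebra_simps)
  also have "\<dots> = n^2 * (N + t) - n * (2 * A * (N + t))"
    by (simp add: algebra_simps)
  finally have "B * (N + t) \<le> n^2 * (N + t) - n * (2 * A * (N + t))" .
  moreover have "2 * A * (N + t) = (N - 1) * t" "B * (N + t) = N * t"
    using Nt by (simp_all add: A_def B_def field_simps)
  ultimately have "N * t \<le> n^2 * (N + t) - n * ((N - 1) * t)"
    by simp
  then have "t * ((N - n) * (n + 1)) \<le> n^2 * N"
    by (simp add: algebra_simps power2_eq_square)
  then show ?thesis
    using assms by (simp add: field_simps)
qed

lemma sample_size_quadratic_bound_ge:
  fixes N t :: real
  assumes "1 \<le> N" "0 \<le> t"
  shows "N * t / (N + t)
    \<le> (N - 1) * t / (2 * (N + t)) + sqrt (((N - 1) * t / (2 * (N + t)))^2 + N * t / (N + t))"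
proof -
  define A where "A = (N - 1) * t / (2 * (N + t))"
  define B where "B = N * t / (N + t)"
  have "2 * A = (N - 1) * t / (N + t)"
    using assms by (simp add: A_def field_simps)
  then have "B - 2 * A = (N * t - (N - 1) * t) / (N + t)"
    by (simp add: B_def diff_divide_distrib)
  also have "\<dots> = t / (N + t)"
    by (simp add: algebra_simps)
  also have "\<dots> \<le> 1"
    using assms by simp
  finally have "(B - A)^2 \<le> A^2 + B"
    using assms mult_left_mono[of "B - 2 * A" 1 B]
    by (simp add: B_def power2_eq_square algebra_simps)
  then have "B - A \<le> sqrt (A^2 + B)"
    by (rule real_le_rsqrt)
  then show ?thesis
    by (simp add: A_def B_def)
qed

lemma hypergeom_prob_estimate_ge_of_sample_size:
  fixes \<delta> c :: real
  assumes "M \<le> N" "1 \<le> n" "n \<le> N" "0 < \<delta>" "\<delta> < 1" "0 < c"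
  defines "t \<equiv> (real N / c)^2 * (- (1/2) * ln (\<delta> / 2))"
  assumes "(real N + 1) * t / (real N + t) \<le> real n
    \<or> (real N - 1) * t / (2 * (real N + t))
        + sqrt (((real N - 1) * t / (2 * (real N + t)))^2 + real N * t / (real N + t)) \<le> real n"
  shows "1 - \<delta> \<le> hypergeom_prob N M n
    (\<lambda>i. real i / real n * real N - c \<le> real M \<and> real M \<le> real i / real n * real N + c)"
proof (cases "n = N")
  case True
  then show ?thesis
    using assms(1,4,6) by (simp add: hypergeom_prob_all_drawn)
next
  case False
  then have "n < N"
    using assms(3) by simp
  have N: "0 < real N" "0 < real n"
    using assms(2,3) by auto
  have "0 \<le> t"
    using assms(4,5) by (simp add: t_def ln_less_zero mult_nonneg_nonpos)
  from assms(8) show ?thesis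
  proof
    assume "(real N + 1) * t / (real N + t) \<le> real n"
    then have "t * (real n * (real N - real n + 1) / real N) \<le> (real n)^2"
      using N \<open>0 \<le> t\<close> by (intro sample_size_linear_bound) auto
    then show ?thesis
      using hypergeom_count_mgf_le_complement[OF \<open>n < N\<close> assms(1)] assms N \<open>n < N\<close>
      by (intro hypergeom_prob_estimate_ge[where V = "real n * (real N - real n + 1) / real N"])
        (auto simp: t_def)
  next
    assume "(real N - 1) * t / (2 * (real N + t))
        + sqrt (((real N - 1) * t / (2 * (real N + t)))^2 + real N * t / (real N + t)) \<le> real n"
    then have "t * ((real N - real n) * (real n + 1) / real N) \<le> (real n)^2"
      using N \<open>0 \<le> t\<close> by (intro sample_size_quadratic_bound) auto
    then show ?thesis
      using hypergeom_count_mgf_le[OF assms(2,3,1)] assms N \<open>n < N\<close>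
      by (intro hypergeom_prob_estimate_ge[where V = "(real N - real n) * (real n + 1) / real N"])
        (auto simp: t_def)
  qed
qed

theorem lemma8:
  fixes N M n :: nat and \<delta> c :: real
  assumes "M \<le> N" and "1 \<le> n" and "n \<le> N"
    and "0 < \<delta>" and "\<delta> < 1" and "0 < c"
  defines "x \<equiv> (real N / c)^2"
    and "y \<equiv> - (1/2) * ln (\<delta> / 2)"
  shows "(((real N \<le> c^2 / y - 2 \<and>
             real n \<ge> (real N + 1) * x * y / (real N + x * y))
         \<or> (real N > c^2 / y - 2 \<and>
             real n \<ge> (real N - 1) * x * y / (2 * (real N + x * y))
               + sqrt (((real N - 1) * x * y / (2 * (real N + x * y)))^2
                       + real N * x * y / (real N + x * y))))
         \<longrightarrow> hypergeom_prob N M n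
               (\<lambda>i. real i / real n * real N - c \<le> real M \<and>
                    real M \<le> real i / real n * real N + c) \<ge> 1 - \<delta>)
     \<and> (real N - 1) * x * y / (2 * (real N + x * y))
         + sqrt (((real N - 1) * x * y / (2 * (real N + x * y)))^2
                 + real N * x * y / (real N + x * y))
       \<ge> real N * x * y / (real N + x * y)"
proof -
  have "0 < x"
    using assms(2,3,6) by (simp add: x_def)
  moreover have "0 < y"
    using assms(4,5) by (simp add: y_def ln_less_zero)
  ultimately have "real N * (x * y) / (real N + x * y)
      \<le> (real N - 1) * (x * y) / (2 * (real N + x * y))
        + sqrt (((real N - 1) * (x * y) / (2 * (real N + x * y)))^2
                + real N * (x * y) / (real N + x * y))"
    using assms(2,3) by (intro sample_size_quadratic_bound_ge) auto
  moreover have "1 - \<delta> \<le> hypergeom_prob N M n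
      (\<lambda>i. real i / real n * real N - c \<le> real M \<and> real M \<le> real i / real n * real N + c)"
    if "(real N + 1) * (x * y) / (real N + x * y) \<le> real n
      \<or> (real N - 1) * (x * y) / (2 * (real N + x * y))
          + sqrt (((real N - 1) * (x * y) / (2 * (real N + x * y)))^2
                  + real N * (x * y) / (real N + x * y)) \<le> real n"
    using assms that unfolding x_def y_def by (intro hypergeom_prob_estimate_ge_of_sample_size)
  ultimately show ?thesis
    by (auto simp only: mult.assoc)
qed

end
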